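(* Suppose $\sigma$ is an automorphism of $D$ and let $f(t)=t^4+a_3t^3+a_2t^2+a_1t+a_0\in D[t;\sigma]$. Then $f$ is irreducible if and only if the following three conditions hold: (1) for all $b\in D$: $\sigma^3(b)\sigma^2(b)\sigma(b)b+a_3\sigma^2(b)\sigma(b)b+a_2\sigma(b)b+a_1b+a_0\neq0$; (2) for all $b\in D$: $\sigma^3(b)\sigma^2(b)\sigma(b)b+\sigma^3(b)\sigma^2(b)\sigma(b)a_3+\sigma^3(b)\sigma^2(b)\sigma(a_2)+\sigma^3(b)\sigma^2(a_1)+\sigma^3(a_0)\neq0$; (3) for all $c,d\in D$: $\sigma^2(c)\sigma(c)c+\sigma^2(d)c+\sigma^2(c)\sigma(d)+a_3(\sigma(d)+\sigma(c)c)+a_2c+a_1\neq0$ or $\sigma^2(d)d+\sigma^2(c)\sigma(c)d+a_3\sigma(c)d+a_2d+a_0\neq0$.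
   Context: $D$ is an associative division ring, $\sigma$ a ring automorphism of $D$, and $D[t;\sigma]$ the skew polynomial ring with $ta=\sigma(a)t$. A polynomial $f$ is irreducible if it is not a unit and has no factorization $f=gh$ with $\deg g,\deg h<\deg f$. *)

theory Defs
  imports "HOL-Computational_Algebra.Polynomial"
begin

definition ring_automorphism :: "('a::division_ring \<Rightarrow> 'a) \<Rightarrow> bool" where
  "ring_automorphism \<sigma> \<longleftrightarrow> bij \<sigma> \<and> (\<forall>a b. \<sigma> (a + b) = \<sigma> a + \<sigma> b)
     \<and> (\<forall>a b. \<sigma> (a * b) = \<sigma> a * \<sigma> b) \<and> \<sigma> 1 = 1"

text \<open>Skew polynomial ring D[t;sigma]: elements are represented by their coefficient
  polynomials (f = sum of a_i t^i, coefficients on the left); multiplication is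
  determined by t a = sigma(a) t, i.e. (a t^i)(b t^j) = a sigma^i(b) t^(i+j).\<close>
definition skew_mult :: "('a::division_ring \<Rightarrow> 'a) \<Rightarrow> 'a poly \<Rightarrow> 'a poly \<Rightarrow> 'a poly" where
  "skew_mult \<sigma> f g = (\<Sum>i\<le>degree f. \<Sum>j\<le>degree g.
      monom (coeff f i * (\<sigma> ^^ i) (coeff g j)) (i + j))"

definition skew_unit :: "('a::division_ring \<Rightarrow> 'a) \<Rightarrow> 'a poly \<Rightarrow> bool" where
  "skew_unit \<sigma> f \<longleftrightarrow> (\<exists>g. skew_mult \<sigma> f g = [:1:] \<and> skew_mult \<sigma> g f = [:1:])"

definition skew_irreducible :: "('a::division_ring \<Rightarrow> 'a) \<Rightarrow> 'a poly \<Rightarrow> bool" where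
  "skew_irreducible \<sigma> f \<longleftrightarrow> \<not> skew_unit \<sigma> f \<and>
     \<not> (\<exists>g h. f = skew_mult \<sigma> g h \<and> degree g < degree f \<and> degree h < degree f)"

end

theory Submission
  imports Defs
begin

(* Since \<sigma> is injective, degrees add under skew multiplication, so the monic quartic f is
   reducible iff f = g h with (deg g, deg h) one of (3,1), (1,3), (2,2). Comparing coefficients
   in each case: f has a right factor t - b iff b is a right root (condition 1); f = (t - b) k iff
   left division by t - b, whose quotient coefficients are preimages under \<sigma>, leaves remainder
   zero, which after applying \<sigma>^3 is condition 2; and f has a right factor t^2 - c t - d iff
   both coefficients of the remainder vanish (condition 3). *)

lemma ring_automorphism_add: "ring_automorphism \<sigma> \<Longrightarrow> \<sigma> (x + y) = \<sigma> x + \<sigma> y"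
  by (simp add: ring_automorphism_def)

lemma ring_automorphism_mult: "ring_automorphism \<sigma> \<Longrightarrow> \<sigma> (x * y) = \<sigma> x * \<sigma> y"
  by (simp add: ring_automorphism_def)

lemma ring_automorphism_one: "ring_automorphism \<sigma> \<Longrightarrow> \<sigma> 1 = 1"
  by (simp add: ring_automorphism_def)

lemma ring_automorphism_zero: "ring_automorphism \<sigma> \<Longrightarrow> \<sigma> 0 = 0"
  using ring_automorphism_add[of \<sigma> 0 0] by simp

lemma ring_automorphism_minus: "ring_automorphism \<sigma> \<Longrightarrow> \<sigma> (- x) = - \<sigma> x"
proof -
  assume "ring_automorphism \<sigma>"
  then have "\<sigma> x + \<sigma> (- x) = 0"
    using ring_automorphism_add[of \<sigma> x "- x"] ring_automorphism_zero[of \<sigma>] by simp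
  then show ?thesis by (rule minus_unique[symmetric])
qed

lemma ring_automorphism_diff: "ring_automorphism \<sigma> \<Longrightarrow> \<sigma> (x - y) = \<sigma> x - \<sigma> y"
  unfolding diff_conv_add_uminus by (simp only: ring_automorphism_add ring_automorphism_minus)

lemma ring_automorphism_bij: "ring_automorphism \<sigma> \<Longrightarrow> bij \<sigma>"
  by (simp add: ring_automorphism_def)

lemma ring_automorphism_eq_iff: "ring_automorphism \<sigma> \<Longrightarrow> \<sigma> x = \<sigma> y \<longleftrightarrow> x = y"
  using bij_is_inj[OF ring_automorphism_bij] by (auto dest: injD)

lemmas ring_automorphism_simps = ring_automorphism_add ring_automorphism_mult
  ring_automorphism_one ring_automorphism_zero ring_automorphism_minus ring_automorphism_diff

lemma funpow_fixpoint: "f x = x \<Longrightarrow> (f ^^ n) x = x"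
  by (induction n) auto

lemma funpow_eq_0_iff:
  fixes \<sigma> :: "'a::zero \<Rightarrow> 'a"
  assumes "inj \<sigma>" "\<sigma> 0 = 0"
  shows "(\<sigma> ^^ n) x = 0 \<longleftrightarrow> x = 0"
  using injD[OF inj_fn[OF assms(1), of n], of x 0] funpow_fixpoint[of \<sigma> 0 n] assms(2) by auto

lemma poly_eqI_degree_le:
  assumes "degree p \<le> N" "degree q \<le> N" "\<And>n. n \<le> N \<Longrightarrow> coeff p n = coeff q n"
  shows "p = q"
proof (rule poly_eqI)
  show "coeff p n = coeff q n" for n
    using assms by (cases "n \<le> N") (auto simp: coeff_eq_0)
qed

lemma coeff_mult_funpow_eq_0:
  fixes \<sigma> :: "'a::division_ring \<Rightarrow> 'a"
  assumes "\<sigma> 0 = 0" "degree f < i \<or> degree g < j"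
  shows "coeff f i * (\<sigma> ^^ i) (coeff g j) = 0"
  using assms funpow_fixpoint[of \<sigma> 0 i] by (auto simp: coeff_eq_0)

lemma coeff_skew_mult:
  fixes \<sigma> :: "'a::division_ring \<Rightarrow> 'a"
  assumes "\<sigma> 0 = 0"
  shows "coeff (skew_mult \<sigma> f g) n = (\<Sum>i\<le>n. coeff f i * (\<sigma> ^^ i) (coeff g (n - i)))"
proof -
  have "coeff (skew_mult \<sigma> f g) n = (\<Sum>i\<le>degree f. \<Sum>j\<le>degree g.
      if i \<le> n then if j = n - i then coeff f i * (\<sigma> ^^ i) (coeff g j) else 0 else 0)"
    unfolding skew_mult_def coeff_sum coeff_monom by (intro sum.cong refl) auto
  also have "\<dots> = (\<Sum>i\<le>degree f. if i \<le> n then coeff f i * (\<sigma> ^^ i) (coeff g (n - i)) else 0)"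
    using coeff_mult_funpow_eq_0[of \<sigma>, OF assms] by (intro sum.cong refl) (auto simp: not_le)
  also have "\<dots> = (\<Sum>i\<le>n. coeff f i * (\<sigma> ^^ i) (coeff g (n - i)))"
    using coeff_mult_funpow_eq_0[of \<sigma>, OF assms] by (intro sum.mono_neutral_cong) auto
  finally show ?thesis .
qed

lemma coeff_skew_mult_degree_add:
  fixes \<sigma> :: "'a::division_ring \<Rightarrow> 'a"
  assumes "\<sigma> 0 = 0"
  shows "coeff (skew_mult \<sigma> f g) (degree f + degree g) =
    lead_coeff f * (\<sigma> ^^ degree f) (lead_coeff g)"
proof -
  let ?n = "degree f + degree g"
  have "coeff (skew_mult \<sigma> f g) ?n =
      (\<Sum>i\<in>{degree f}. coeff f i * (\<sigma> ^^ i) (coeff g (?n - i)))"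
    unfolding coeff_skew_mult[of \<sigma>, OF assms]
    by (intro sum.mono_neutral_right ballI coeff_mult_funpow_eq_0[of \<sigma>, OF assms]) auto
  then show ?thesis by simp
qed

lemma degree_skew_mult_le:
  fixes \<sigma> :: "'a::division_ring \<Rightarrow> 'a"
  assumes "\<sigma> 0 = 0"
  shows "degree (skew_mult \<sigma> f g) \<le> degree f + degree g"
proof (rule degree_le, intro allI impI)
  fix n assume "degree f + degree g < n"
  then show "coeff (skew_mult \<sigma> f g) n = 0"
    unfolding coeff_skew_mult[of \<sigma>, OF assms]
    by (intro sum.neutral ballI coeff_mult_funpow_eq_0[of \<sigma>, OF assms]) auto
qed

lemma degree_skew_mult:
  fixes \<sigma> :: "'a::division_ring \<Rightarrow> 'a"
  assumes "inj \<sigma>" "\<sigma> 0 = 0" "f \<noteq> 0" "g \<noteq> 0"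
  shows "degree (skew_mult \<sigma> f g) = degree f + degree g"
proof (rule order_antisym)
  show "degree (skew_mult \<sigma> f g) \<le> degree f + degree g"
    using degree_skew_mult_le[of \<sigma>, OF assms(2)] .
  have "coeff (skew_mult \<sigma> f g) (degree f + degree g) \<noteq> 0"
    using assms by (simp add: coeff_skew_mult_degree_add funpow_eq_0_iff)
  then show "degree f + degree g \<le> degree (skew_mult \<sigma> f g)"
    by (rule le_degree)
qed

lemma skew_mult_0:
  fixes \<sigma> :: "'a::division_ring \<Rightarrow> 'a"
  assumes "\<sigma> 0 = 0"
  shows "skew_mult \<sigma> 0 g = 0" "skew_mult \<sigma> f 0 = 0"
  by (simp_all add: poly_eq_iff coeff_skew_mult[of \<sigma>, OF assms] funpow_fixpoint[of \<sigma>, OF assms])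

lemma degree_add_eq_if_skew_mult_eq:
  fixes \<sigma> :: "'a::division_ring \<Rightarrow> 'a"
  assumes "inj \<sigma>" "\<sigma> 0 = 0" "f = skew_mult \<sigma> g h" "f \<noteq> 0"
  shows "degree g + degree h = degree f"
  using assms degree_skew_mult[of \<sigma> g h] skew_mult_0[of \<sigma>] by fastforce

lemma skew_irreducible_iff_no_nonconstant_factors:
  fixes \<sigma> :: "'a::division_ring \<Rightarrow> 'a"
  assumes "inj \<sigma>" "\<sigma> 0 = 0" "degree f > 0"
  shows "skew_irreducible \<sigma> f \<longleftrightarrow>
    \<not> (\<exists>g h. f = skew_mult \<sigma> g h \<and> 0 < degree g \<and> 0 < degree h)"
proof -
  have "f \<noteq> 0"
    using assms(3) by auto
  have "\<not> skew_unit \<sigma> f"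
  proof
    assume "skew_unit \<sigma> f"
    then obtain g where "[:1:] = skew_mult \<sigma> f g"
      by (auto simp: skew_unit_def dest: sym)
    from degree_add_eq_if_skew_mult_eq[OF assms(1,2) this]
    have "degree f + degree g = 0"
      by simp
    with assms(3) show False by simp
  qed
  moreover have "degree g < degree f \<and> degree h < degree f \<longleftrightarrow> 0 < degree g \<and> 0 < degree h"
    if "f = skew_mult \<sigma> g h" for g h
    using degree_add_eq_if_skew_mult_eq[OF assms(1,2) that \<open>f \<noteq> 0\<close>] by auto
  ultimately show ?thesis
    unfolding skew_irreducible_def by metis
qed

lemma nonconstant_skew_factors_of_quartic_iff:
  fixes \<sigma> :: "'a::division_ring \<Rightarrow> 'a"
  assumes "inj \<sigma>" "\<sigma> 0 = 0" "degree f = 4"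
  shows "(\<exists>g h. f = skew_mult \<sigma> g h \<and> 0 < degree g \<and> 0 < degree h) \<longleftrightarrow>
    (\<exists>g h. f = skew_mult \<sigma> g h \<and> degree g = 3 \<and> degree h = 1) \<or>
    (\<exists>g h. f = skew_mult \<sigma> g h \<and> degree g = 1 \<and> degree h = 3) \<or>
    (\<exists>g h. f = skew_mult \<sigma> g h \<and> degree g = 2 \<and> degree h = 2)"
    (is "_ \<longleftrightarrow> ?factors_3_1 \<or> ?factors_1_3 \<or> ?factors_2_2")
proof
  assume "\<exists>g h. f = skew_mult \<sigma> g h \<and> 0 < degree g \<and> 0 < degree h"
  then obtain g h where f: "f = skew_mult \<sigma> g h" and "0 < degree g" "0 < degree h"
    by blast
  moreover have "degree g + degree h = 4"
    using degree_add_eq_if_skew_mult_eq[OF assms(1,2) f] assms(3) by force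
  ultimately have "degree g = 3 \<and> degree h = 1 \<or> degree g = 1 \<and> degree h = 3 \<or>
      degree g = 2 \<and> degree h = 2"
    by arith
  with f show "?factors_3_1 \<or> ?factors_1_3 \<or> ?factors_2_2"
    by blast
qed fastforce

lemma monic_quartic_eq_skew_mult_iff:
  fixes \<sigma> :: "'a::division_ring \<Rightarrow> 'a"
  assumes "\<sigma> 0 = 0" "degree g + degree h \<le> 4"
  shows "[:a0, a1, a2, a3, 1:] = skew_mult \<sigma> g h \<longleftrightarrow>
    a0 = coeff g 0 * coeff h 0 \<and>
    a1 = coeff g 0 * coeff h 1 + coeff g 1 * \<sigma> (coeff h 0) \<and>
    a2 = coeff g 0 * coeff h 2 + coeff g 1 * \<sigma> (coeff h 1) + coeff g 2 * \<sigma> (\<sigma> (coeff h 0)) \<and>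
    a3 = coeff g 0 * coeff h 3 + coeff g 1 * \<sigma> (coeff h 2) + coeff g 2 * \<sigma> (\<sigma> (coeff h 1))
      + coeff g 3 * \<sigma> (\<sigma> (\<sigma> (coeff h 0))) \<and>
    1 = coeff g 0 * coeff h 4 + coeff g 1 * \<sigma> (coeff h 3) + coeff g 2 * \<sigma> (\<sigma> (coeff h 2))
      + coeff g 3 * \<sigma> (\<sigma> (\<sigma> (coeff h 1))) + coeff g 4 * \<sigma> (\<sigma> (\<sigma> (\<sigma> (coeff h 0))))"
proof -
  have "degree (skew_mult \<sigma> g h) \<le> 4"
    using degree_skew_mult_le[of \<sigma> g h, OF assms(1)] assms(2) by linarith
  then have "[:a0, a1, a2, a3, 1:] = skew_mult \<sigma> g h \<longleftrightarrow>
      (\<forall>n\<in>{..4}. coeff [:a0, a1, a2, a3, 1:] n = coeff (skew_mult \<sigma> g h) n)"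
    by (auto intro: poly_eqI_degree_le[of _ 4])
  then show ?thesis
    by (auto simp: coeff_skew_mult[of \<sigma>, OF assms(1)] atMost_Suc numeral_eq_Suc add_ac)
qed

context
  fixes \<sigma> :: "'a::division_ring \<Rightarrow> 'a"
  assumes aut: "ring_automorphism \<sigma>"
  notes [simp] = ring_automorphism_simps[OF aut] ring_automorphism_eq_iff[OF aut]
begin

lemmas automorphism_inj = bij_is_inj[OF ring_automorphism_bij[OF aut]]
lemmas automorphism_surj = bij_is_surj[OF ring_automorphism_bij[OF aut]]

lemma funpow_automorphism_mult: "(\<sigma> ^^ k) (x * y) = (\<sigma> ^^ k) x * (\<sigma> ^^ k) y"
  by (induction k) auto

lemma funpow_automorphism_one: "(\<sigma> ^^ k) 1 = 1"
  by (induction k) auto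

lemma monic_quartic_right_linear_factor_iff:
  "(\<exists>g h. [:a0, a1, a2, a3, 1:] = skew_mult \<sigma> g h \<and> degree g = 3 \<and> degree h = 1) \<longleftrightarrow>
    (\<exists>b. (\<sigma>^^3) b * (\<sigma>^^2) b * \<sigma> b * b + a3 * (\<sigma>^^2) b * \<sigma> b * b
          + a2 * \<sigma> b * b + a1 * b + a0 = 0)"
proof
  assume "\<exists>g h. [:a0, a1, a2, a3, 1:] = skew_mult \<sigma> g h \<and> degree g = 3 \<and> degree h = 1"
  then obtain g h where "[:a0, a1, a2, a3, 1:] = skew_mult \<sigma> g h" and "degree g = 3"
    and h: "degree h = 1"
    by blast
  then have a: "a0 = coeff g 0 * coeff h 0" "a1 = coeff g 0 * coeff h 1 + coeff g 1 * \<sigma> (coeff h 0)"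
    "a2 = coeff g 1 * \<sigma> (coeff h 1) + coeff g 2 * \<sigma> (\<sigma> (coeff h 0))"
    "a3 = coeff g 2 * \<sigma> (\<sigma> (coeff h 1)) + coeff g 3 * \<sigma> (\<sigma> (\<sigma> (coeff h 0)))"
    "1 = coeff g 3 * \<sigma> (\<sigma> (\<sigma> (coeff h 1)))"
    by (simp_all add: monic_quartic_eq_skew_mult_iff coeff_eq_0)
  have "coeff h 1 \<noteq> 0"
    using h by (metis leading_coeff_0_iff one_neq_zero degree_0)
  \<comment> \<open>h = h1 (t - b)\<close>
  define b where "b = - (inverse (coeff h 1) * coeff h 0)"
  have "coeff h 0 = - (coeff h 1 * b)"
    using \<open>coeff h 1 \<noteq> 0\<close> by (simp add: b_def mult.assoc[symmetric])
  moreover have "coeff g 3 * (\<sigma> (\<sigma> (\<sigma> (coeff h 1))) * x) = x" for x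
    using a(5) by (simp add: mult.assoc[symmetric])
  ultimately show "\<exists>b. (\<sigma>^^3) b * (\<sigma>^^2) b * \<sigma> b * b + a3 * (\<sigma>^^2) b * \<sigma> b * b
          + a2 * \<sigma> b * b + a1 * b + a0 = 0"
    by (intro exI[of _ b]) (simp add: a(1-4) eval_nat_numeral algebra_simps)
next
  assume "\<exists>b. (\<sigma>^^3) b * (\<sigma>^^2) b * \<sigma> b * b + a3 * (\<sigma>^^2) b * \<sigma> b * b
          + a2 * \<sigma> b * b + a1 * b + a0 = 0"
  then obtain b where "(\<sigma>^^3) b * (\<sigma>^^2) b * \<sigma> b * b + a3 * (\<sigma>^^2) b * \<sigma> b * b
          + a2 * \<sigma> b * b + a1 * b + a0 = 0"
    by blast
  then have a0: "a0 = - ((\<sigma>^^3) b * (\<sigma>^^2) b * \<sigma> b * b + a3 * (\<sigma>^^2) b * \<sigma> b * b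
          + a2 * \<sigma> b * b + a1 * b)"
    by (rule minus_unique[symmetric])
  define g2 where "g2 = a3 + \<sigma> (\<sigma> (\<sigma> b))"
  define g1 where "g1 = a2 + g2 * \<sigma> (\<sigma> b)"
  define g0 where "g0 = a1 + g1 * \<sigma> b"
  have "[:a0, a1, a2, a3, 1:] = skew_mult \<sigma> [:g0, g1, g2, 1:] [:-b, 1:]"
    by (simp add: monic_quartic_eq_skew_mult_iff g0_def g1_def g2_def a0 eval_nat_numeral
        algebra_simps)
  then show "\<exists>g h. [:a0, a1, a2, a3, 1:] = skew_mult \<sigma> g h \<and> degree g = 3 \<and> degree h = 1"
    by fastforce
qed

lemma monic_quartic_left_linear_factor_iff:
  "(\<exists>g h. [:a0, a1, a2, a3, 1:] = skew_mult \<sigma> g h \<and> degree g = 1 \<and> degree h = 3) \<longleftrightarrow>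
    (\<exists>b. (\<sigma>^^3) b * (\<sigma>^^2) b * \<sigma> b * b + (\<sigma>^^3) b * (\<sigma>^^2) b * \<sigma> b * a3
          + (\<sigma>^^3) b * (\<sigma>^^2) b * \<sigma> a2 + (\<sigma>^^3) b * (\<sigma>^^2) a1 + (\<sigma>^^3) a0 = 0)"
proof
  assume "\<exists>g h. [:a0, a1, a2, a3, 1:] = skew_mult \<sigma> g h \<and> degree g = 1 \<and> degree h = 3"
  then obtain g h where "[:a0, a1, a2, a3, 1:] = skew_mult \<sigma> g h" and "degree g = 1"
    and h: "degree h = 3"
    by blast
  then have a: "a0 = coeff g 0 * coeff h 0" "a1 = coeff g 0 * coeff h 1 + coeff g 1 * \<sigma> (coeff h 0)"
    "a2 = coeff g 0 * coeff h 2 + coeff g 1 * \<sigma> (coeff h 1)"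
    "a3 = coeff g 0 * coeff h 3 + coeff g 1 * \<sigma> (coeff h 2)"
    "1 = coeff g 1 * \<sigma> (coeff h 3)"
    by (simp_all add: monic_quartic_eq_skew_mult_iff coeff_eq_0)
  obtain c where c: "coeff g 1 = \<sigma> c"
    using automorphism_surj by (metis surjD)
  with a(5) have "\<sigma> (c * coeff h 3) = \<sigma> 1"
    by simp
  then have "c * coeff h 3 = 1"
    by (simp only: ring_automorphism_eq_iff[OF aut])
  then have cancel: "(\<sigma> ^^ k) c * ((\<sigma> ^^ k) (coeff h 3) * x) = x" for k x
    by (simp add: mult.assoc[symmetric] funpow_automorphism_mult[symmetric] funpow_automorphism_one)
  have "c \<noteq> 0"
    using \<open>c * coeff h 3 = 1\<close> by auto
  \<comment> \<open>g = \<sigma>(c) t + g0 = (t - b) c\<close>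
  define b where "b = - (coeff g 0 * inverse c)"
  have "coeff g 0 = - (b * c)"
    using \<open>c \<noteq> 0\<close> by (simp add: b_def mult.assoc)
  then show "\<exists>b. (\<sigma>^^3) b * (\<sigma>^^2) b * \<sigma> b * b + (\<sigma>^^3) b * (\<sigma>^^2) b * \<sigma> b * a3
          + (\<sigma>^^3) b * (\<sigma>^^2) b * \<sigma> a2 + (\<sigma>^^3) b * (\<sigma>^^2) a1 + (\<sigma>^^3) a0 = 0"
    using cancel[of 0] cancel[of 1] cancel[of 2] cancel[of 3] \<open>c * coeff h 3 = 1\<close>
    by (intro exI[of _ b]) (simp add: a(1-4)[unfolded c] eval_nat_numeral algebra_simps)
next
  assume "\<exists>b. (\<sigma>^^3) b * (\<sigma>^^2) b * \<sigma> b * b + (\<sigma>^^3) b * (\<sigma>^^2) b * \<sigma> b * a3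
          + (\<sigma>^^3) b * (\<sigma>^^2) b * \<sigma> a2 + (\<sigma>^^3) b * (\<sigma>^^2) a1 + (\<sigma>^^3) a0 = 0"
  then obtain b where E: "(\<sigma>^^3) b * (\<sigma>^^2) b * \<sigma> b * b + (\<sigma>^^3) b * (\<sigma>^^2) b * \<sigma> b * a3
          + (\<sigma>^^3) b * (\<sigma>^^2) b * \<sigma> a2 + (\<sigma>^^3) b * (\<sigma>^^2) a1 + (\<sigma>^^3) a0 = 0"
    by blast
  \<comment> \<open>Left division by t - b: since t k = \<sigma>(k) t, the quotient's coefficients
    are preimages under \<sigma>.\<close>
  obtain k2 where k2: "\<sigma> k2 = a3 + b"
    using surjD[OF automorphism_surj] by metis
  obtain k1 where k1: "\<sigma> k1 = a2 + b * k2"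
    using surjD[OF automorphism_surj] by metis
  obtain k0 where k0: "\<sigma> k0 = a1 + b * k1"
    using surjD[OF automorphism_surj] by metis
  have "(\<sigma> ^^ 3) (a0 + b * k0) = 0"
    using E by (simp add: k0 k1 k2 eval_nat_numeral algebra_simps)
  then have "a0 = - (b * k0)"
    by (simp add: funpow_eq_0_iff[OF automorphism_inj] eq_neg_iff_add_eq_0)
  then have "[:a0, a1, a2, a3, 1:] = skew_mult \<sigma> [:-b, 1:] [:k0, k1, k2, 1:]"
    by (simp add: monic_quartic_eq_skew_mult_iff k0 k1 k2 eval_nat_numeral algebra_simps)
  then show "\<exists>g h. [:a0, a1, a2, a3, 1:] = skew_mult \<sigma> g h \<and> degree g = 1 \<and> degree h = 3"
    by fastforce
qed

lemma monic_quartic_quadratic_factors_iff: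
  "(\<exists>g h. [:a0, a1, a2, a3, 1:] = skew_mult \<sigma> g h \<and> degree g = 2 \<and> degree h = 2) \<longleftrightarrow>
    (\<exists>c d. (\<sigma>^^2) c * \<sigma> c * c + (\<sigma>^^2) d * c + (\<sigma>^^2) c * \<sigma> d
              + a3 * (\<sigma> d + \<sigma> c * c) + a2 * c + a1 = 0
          \<and> (\<sigma>^^2) d * d + (\<sigma>^^2) c * \<sigma> c * d + a3 * \<sigma> c * d + a2 * d + a0 = 0)"
proof
  assume "\<exists>g h. [:a0, a1, a2, a3, 1:] = skew_mult \<sigma> g h \<and> degree g = 2 \<and> degree h = 2"
  then obtain g h where "[:a0, a1, a2, a3, 1:] = skew_mult \<sigma> g h" and "degree g = 2"
    and h: "degree h = 2"
    by blast
  then have a: "a0 = coeff g 0 * coeff h 0" "a1 = coeff g 0 * coeff h 1 + coeff g 1 * \<sigma> (coeff h 0)"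
    "a2 = coeff g 0 * coeff h 2 + coeff g 1 * \<sigma> (coeff h 1) + coeff g 2 * \<sigma> (\<sigma> (coeff h 0))"
    "a3 = coeff g 1 * \<sigma> (coeff h 2) + coeff g 2 * \<sigma> (\<sigma> (coeff h 1))"
    "1 = coeff g 2 * \<sigma> (\<sigma> (coeff h 2))"
    by (simp_all add: monic_quartic_eq_skew_mult_iff coeff_eq_0)
  have "coeff h 2 \<noteq> 0"
    using h by (metis leading_coeff_0_iff zero_neq_numeral degree_0)
  \<comment> \<open>h = h2 (t^2 - c t - d)\<close>
  define c where "c = - (inverse (coeff h 2) * coeff h 1)"
  define d where "d = - (inverse (coeff h 2) * coeff h 0)"
  have "coeff h 1 = - (coeff h 2 * c)" "coeff h 0 = - (coeff h 2 * d)"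
    using \<open>coeff h 2 \<noteq> 0\<close> by (simp_all add: c_def d_def mult.assoc[symmetric])
  moreover have "coeff g 2 * (\<sigma> (\<sigma> (coeff h 2)) * x) = x" for x
    using a(5) by (simp add: mult.assoc[symmetric])
  ultimately show "\<exists>c d. (\<sigma>^^2) c * \<sigma> c * c + (\<sigma>^^2) d * c + (\<sigma>^^2) c * \<sigma> d
              + a3 * (\<sigma> d + \<sigma> c * c) + a2 * c + a1 = 0
          \<and> (\<sigma>^^2) d * d + (\<sigma>^^2) c * \<sigma> c * d + a3 * \<sigma> c * d + a2 * d + a0 = 0"
    by (intro exI[of _ c] exI[of _ d]) (simp add: a(1-4) eval_nat_numeral algebra_simps)
next
  assume "\<exists>c d. (\<sigma>^^2) c * \<sigma> c * c + (\<sigma>^^2) d * c + (\<sigma>^^2) c * \<sigma> d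
              + a3 * (\<sigma> d + \<sigma> c * c) + a2 * c + a1 = 0
          \<and> (\<sigma>^^2) d * d + (\<sigma>^^2) c * \<sigma> c * d + a3 * \<sigma> c * d + a2 * d + a0 = 0"
  then obtain c d where E1: "(\<sigma>^^2) c * \<sigma> c * c + (\<sigma>^^2) d * c + (\<sigma>^^2) c * \<sigma> d
              + a3 * (\<sigma> d + \<sigma> c * c) + a2 * c + a1 = 0"
    and E2: "(\<sigma>^^2) d * d + (\<sigma>^^2) c * \<sigma> c * d + a3 * \<sigma> c * d + a2 * d + a0 = 0"
    by blast
  have a1: "a1 = - ((\<sigma>^^2) c * \<sigma> c * c + (\<sigma>^^2) d * c + (\<sigma>^^2) c * \<sigma> d
              + a3 * (\<sigma> d + \<sigma> c * c) + a2 * c)"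
    using E1 by (rule minus_unique[symmetric])
  have a0: "a0 = - ((\<sigma>^^2) d * d + (\<sigma>^^2) c * \<sigma> c * d + a3 * \<sigma> c * d + a2 * d)"
    using E2 by (rule minus_unique[symmetric])
  define g1 where "g1 = a3 + \<sigma> (\<sigma> c)"
  define g0 where "g0 = a2 + g1 * \<sigma> c + \<sigma> (\<sigma> d)"
  have "[:a0, a1, a2, a3, 1:] = skew_mult \<sigma> [:g0, g1, 1:] [:-d, -c, 1:]"
    by (simp add: monic_quartic_eq_skew_mult_iff g0_def g1_def a0 a1 eval_nat_numeral
        algebra_simps)
  then show "\<exists>g h. [:a0, a1, a2, a3, 1:] = skew_mult \<sigma> g h \<and> degree g = 2 \<and> degree h = 2"
    by fastforce
qed

end

theorem mainTheorem15:
  fixes \<sigma> :: "'a::division_ring \<Rightarrow> 'a" and a0 a1 a2 a3 :: 'a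
  assumes "ring_automorphism \<sigma>"
  shows "skew_irreducible \<sigma> [:a0, a1, a2, a3, 1:] \<longleftrightarrow>
    (\<forall>b. (\<sigma>^^3) b * (\<sigma>^^2) b * \<sigma> b * b + a3 * (\<sigma>^^2) b * \<sigma> b * b
          + a2 * \<sigma> b * b + a1 * b + a0 \<noteq> 0) \<and>
    (\<forall>b. (\<sigma>^^3) b * (\<sigma>^^2) b * \<sigma> b * b + (\<sigma>^^3) b * (\<sigma>^^2) b * \<sigma> b * a3
          + (\<sigma>^^3) b * (\<sigma>^^2) b * \<sigma> a2 + (\<sigma>^^3) b * (\<sigma>^^2) a1 + (\<sigma>^^3) a0 \<noteq> 0) \<and>
    (\<forall>c d. (\<sigma>^^2) c * \<sigma> c * c + (\<sigma>^^2) d * c + (\<sigma>^^2) c * \<sigma> d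
              + a3 * (\<sigma> d + \<sigma> c * c) + a2 * c + a1 \<noteq> 0
          \<or> (\<sigma>^^2) d * d + (\<sigma>^^2) c * \<sigma> c * d + a3 * \<sigma> c * d + a2 * d + a0 \<noteq> 0)"
proof -
  let ?f = "[:a0, a1, a2, a3, 1:]"
  have inj: "inj \<sigma>" and zero: "\<sigma> 0 = 0"
    using assms by (simp_all add: ring_automorphism_zero ring_automorphism_bij bij_is_inj)
  have "degree ?f = 4" and deg: "0 < degree ?f"
    by simp_all
  from nonconstant_skew_factors_of_quartic_iff[OF inj zero this(1)]
  show ?thesis
    unfolding skew_irreducible_iff_no_nonconstant_factors[OF inj zero deg]
      monic_quartic_right_linear_factor_iff[OF assms] monic_quartic_left_linear_factor_iff[OF assms]
      monic_quartic_quadratic_factors_iff[OF assms]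
    by blast
qed

end
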